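(* Consider the single-round multidimensional procurement auction described in the context. If every player reports its true type, i.e. $(c'_i,s'_i)=(c_i,s_i)$ for all $i$, then every player's utility is nonnegative: $u_i\ge 0$ for all $i$ (individual rationality, $p_i-c_i\ge 0$).
   Context: A distributor allocates tasks to $n$ players (mobile devices). Each player $i$ has a private type $(c_i,s_i)$, where $s_i>0$ is its actual service quotient (amount of data it processes per second) and $c_i>0$ is its actual cost of performing the task. Each player $i$ submits a bid $(c'_i,s'_i)$. Allocation: the distributor computes weights $w_i=s'_i/c'_i$ from the reported bids, orders players by decreasing weight (relabel so that player $1$ has the largest weight, etc.), and selects the largest number $k$ of top-ranked players $\{1,\dots,k\}$ for which the budget constraint $\sum_{i} p_i/s_i\le B$ holds for a given budget $B>0$ (there is a player ranked $k+1$). Write $c_{k+1},s_{k+1}$ for the reported cost and service quotient of the player ranked $k+1$. Payment: players ranked $i>k$ receive $p_i=0$; a selected player $i\le k$ receives $p_i=p^1_i+p^2_i$ with $p^1_i=s'_i\,c_{k+1}/s_{k+1}$ and $p^2_i=d(s_i,s'_i)(s_i-s'_i)$, where $s_i$ is the actual service quotient observed after task completion and $d(s_i,s'_i)=0$ if $s_i\ge s'_i$, $d(s_i,s'_i)=(s'_i-s_i)^2+c_{k+1}/s_{k+1}$ if $s_i<s'_i$. The utility of player $i$ is $u_i=p_i-c_i$ if selected and $0$ otherwise. *)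

theory Defs
  imports Complex_Main
begin

text \<open>Types: actual cost c, actual service quotient s.
Bids: cb (reported cost), sb (reported service quotient).
A ranking sigma maps rank r (0-based; rank r is the paper's rank r+1) to a player,
ordered by non-increasing reported weight sb/cb.\<close>

definition ranking :: "nat \<Rightarrow> (nat \<Rightarrow> real) \<Rightarrow> (nat \<Rightarrow> real) \<Rightarrow> (nat \<Rightarrow> nat) \<Rightarrow> bool" where
  "ranking n cb sb \<sigma> \<longleftrightarrow> bij_betw \<sigma> {..<n} {..<n} \<and>
     (\<forall>a b. a \<le> b \<and> b < n \<longrightarrow> sb (\<sigma> b) / cb (\<sigma> b) \<le> sb (\<sigma> a) / cb (\<sigma> a))"

text \<open>Penalty coefficient d(s_i, s'_i), with threshold t = c_{k+1}/s_{k+1} (reported).\<close>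
definition dpen :: "real \<Rightarrow> real \<Rightarrow> real \<Rightarrow> real" where
  "dpen t si si' = (if si \<ge> si' then 0 else (si' - si)^2 + t)"

text \<open>Payment to the player at (0-based) rank r when the first k ranks (0..<k) are selected;
the paper's player k+1 is the one at 0-based rank k.\<close>
definition payment :: "(nat \<Rightarrow> real) \<Rightarrow> (nat \<Rightarrow> real) \<Rightarrow> (nat \<Rightarrow> real) \<Rightarrow> (nat \<Rightarrow> nat) \<Rightarrow> nat \<Rightarrow> nat \<Rightarrow> real" where
  "payment s cb sb \<sigma> k r =
     (let t = cb (\<sigma> k) / sb (\<sigma> k); i = \<sigma> r in
      sb i * t + dpen t (s i) (sb i) * (s i - sb i))"

definition budget_ok :: "real \<Rightarrow> (nat \<Rightarrow> real) \<Rightarrow> (nat \<Rightarrow> real) \<Rightarrow> (nat \<Rightarrow> real) \<Rightarrow> (nat \<Rightarrow> nat) \<Rightarrow> nat \<Rightarrow> bool" where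
  "budget_ok B s cb sb \<sigma> k \<longleftrightarrow> (\<Sum>r<k. payment s cb sb \<sigma> k r / s (\<sigma> r)) \<le> B"

text \<open>Number of selected players: largest k such that the budget constraint holds and
there is a player ranked k+1 (i.e. k < n).\<close>
definition num_selected :: "nat \<Rightarrow> real \<Rightarrow> (nat \<Rightarrow> real) \<Rightarrow> (nat \<Rightarrow> real) \<Rightarrow> (nat \<Rightarrow> real) \<Rightarrow> (nat \<Rightarrow> nat) \<Rightarrow> nat" where
  "num_selected n B s cb sb \<sigma> = (GREATEST k. k < n \<and> budget_ok B s cb sb \<sigma> k)"

definition utility :: "nat \<Rightarrow> real \<Rightarrow> (nat \<Rightarrow> real) \<Rightarrow> (nat \<Rightarrow> real) \<Rightarrow> (nat \<Rightarrow> real) \<Rightarrow> (nat \<Rightarrow> real) \<Rightarrow> (nat \<Rightarrow> nat) \<Rightarrow> nat \<Rightarrow> real" where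
  "utility n B c s cb sb \<sigma> i =
     (let k = num_selected n B s cb sb \<sigma>; r = the_inv_into {..<n} \<sigma> i in
      if r < k then payment s cb sb \<sigma> k r - c i else 0)"

end

theory Submission
  imports Defs
begin

text \<open>Under truthful bidding the penalty term vanishes, so a selected player receives
  its service quotient times the critical cost-per-service ratio of the first rejected
  player. Since players are ranked by decreasing service per cost, every selected player's
  own ratio is at most the critical one, so the payment covers its cost.\<close>

lemma payment_truthful:
  "payment s c s \<sigma> k r = s (\<sigma> r) * (c (\<sigma> k) / s (\<sigma> k))"
  by (simp add: payment_def dpen_def Let_def)

lemma budget_ok_0: "B \<ge> 0 \<Longrightarrow> budget_ok B s cb sb \<sigma> 0"
  by (simp add: budget_ok_def)

lemma num_selected_lt:
  assumes "B \<ge> 0" and "0 < n"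
  shows "num_selected n B s cb sb \<sigma> < n"
proof -
  have "num_selected n B s cb sb \<sigma> < n \<and> budget_ok B s cb sb \<sigma> (num_selected n B s cb sb \<sigma>)"
    unfolding num_selected_def
    by (rule GreatestI_nat[where k = 0 and b = n]) (use assms budget_ok_0 in auto)
  then show ?thesis ..
qed

lemma cost_le_truthful_payment:
  assumes pos: "\<forall>i<n. c i > 0 \<and> s i > 0"
    and rk: "ranking n c s \<sigma>"
    and "r \<le> k" and "k < n"
  shows "c (\<sigma> r) \<le> payment s c s \<sigma> k r"
proof -
  have "\<sigma> r < n" "\<sigma> k < n"
    using rk assms(3,4) by (auto simp: ranking_def bij_betw_def)
  then have ps: "c (\<sigma> r) > 0" "s (\<sigma> r) > 0" "c (\<sigma> k) > 0" "s (\<sigma> k) > 0"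
    using pos by auto
  have "s (\<sigma> k) / c (\<sigma> k) \<le> s (\<sigma> r) / c (\<sigma> r)"
    using rk assms(3,4) by (simp add: ranking_def)
  then have "c (\<sigma> r) \<le> s (\<sigma> r) * (c (\<sigma> k) / s (\<sigma> k))"
    using ps by (simp add: field_simps)
  then show ?thesis
    by (simp add: payment_truthful)
qed

lemma ranking_inv_rank:
  assumes "ranking n cb sb \<sigma>" and "i < n"
  shows "the_inv_into {..<n} \<sigma> i < n" and "\<sigma> (the_inv_into {..<n} \<sigma> i) = i"
  using assms the_inv_into_into[of \<sigma> "{..<n}" i "{..<n}"]
  by (auto simp: ranking_def bij_betw_def f_the_inv_into_f)

theorem lemma4:
  fixes n :: nat and B :: real and c s :: "nat \<Rightarrow> real" and \<sigma> :: "nat \<Rightarrow> nat"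
  assumes "B > 0"
    and "\<forall>i<n. c i > 0 \<and> s i > 0"
    and "ranking n c s \<sigma>"
    and "i < n"
  shows "utility n B c s c s \<sigma> i \<ge> 0"
proof -
  define k where "k = num_selected n B s c s \<sigma>"
  define r where "r = the_inv_into {..<n} \<sigma> i"
  have "k < n"
    unfolding k_def using assms(1,4) by (intro num_selected_lt) auto
  have "\<sigma> r = i"
    unfolding r_def using ranking_inv_rank assms(3,4) by blast
  have "c i \<le> payment s c s \<sigma> k r" if "r < k"
    using cost_le_truthful_payment[OF assms(2,3)] that \<open>k < n\<close> \<open>\<sigma> r = i\<close> by force
  then show ?thesis
    by (simp add: utility_def Let_def k_def[symmetric] r_def[symmetric])
qed

end
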